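(* Let $r$ be a positive integer with $r\le n_i$ for all $i$, and let $T=\sum_{j=1}^r e_1^j\otimes\cdots\otimes e_d^j$. The stabilizer $H=\{g\in G: g\cdot T=T\}$ consists exactly of the elements $$h = \begin{bmatrix} D_1Q & M_1\\ 0 & A_1\end{bmatrix}\times\cdots\times\begin{bmatrix} D_dQ & M_d\\ 0 & A_d\end{bmatrix}$$ (block sizes $r$ and $n_i-r$), where $D_1,\dots,D_d$ are invertible diagonal $r\times r$ matrices with $D_1D_2\cdots D_d=I$, $Q$ is an $r\times r$ permutation matrix (the same in every factor), the $A_i$ are invertible $(n_i-r)\times(n_i-r)$ matrices, and the $M_i$ are arbitrary $r\times(n_i-r)$ matrices.
   Context: Fix integers $d\ge 3$ and $n_1,\dots,n_d\ge 2$. $V=\mathbb{R}^{n_1}\otimes\cdots\otimes\mathbb{R}^{n_d}$, and $G=\mathrm{GL}(n_1)\times\cdots\times\mathrm{GL}(n_d)$ (real invertible matrices) acts on $V$ by $(g_1,\dots,g_d)\cdot(v_1\otimes\cdots\otimes v_d)=(g_1v_1)\otimes\cdots\otimes(g_dv_d)$, extended linearly. $e_i^1,\dots,e_i^{n_i}$ is the standard basis of $\mathbb{R}^{n_i}$. *)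

theory Defs
  imports "Jordan_Normal_Form.Matrix" "HOL-Combinatorics.Permutations"
begin

text \<open>Multi-indices of the tensor space R^{n_0} (x) ... (x) R^{n_{d-1}} (0-based).\<close>
definition tidx :: "nat \<Rightarrow> (nat \<Rightarrow> nat) \<Rightarrow> (nat \<Rightarrow> nat) set" where
  "tidx d n = PiE {..<d} (\<lambda>i. {..<n i})"

text \<open>Tensors are coefficient functions on multi-indices w.r.t. the basis e^{a_0} (x) ... (x) e^{a_{d-1}}.
  Action of g = (g_0,...,g_{d-1}) in GL(n_0) x ... x GL(n_{d-1}).\<close>
definition tact :: "nat \<Rightarrow> (nat \<Rightarrow> nat) \<Rightarrow> (nat \<Rightarrow> real mat) \<Rightarrow> ((nat \<Rightarrow> nat) \<Rightarrow> real)
    \<Rightarrow> ((nat \<Rightarrow> nat) \<Rightarrow> real)" where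
  "tact d n g T = (\<lambda>a. \<Sum>b\<in>tidx d n. (\<Prod>i<d. g i $$ (a i, b i)) * T b)"

definition diag_tensor :: "nat \<Rightarrow> nat \<Rightarrow> (nat \<Rightarrow> nat) \<Rightarrow> real" where
  "diag_tensor d r = (\<lambda>a. if \<exists>j<r. \<forall>i<d. a i = j then 1 else 0)"

definition permutation_mat :: "nat \<Rightarrow> real mat \<Rightarrow> bool" where
  "permutation_mat r Q \<longleftrightarrow> Q \<in> carrier_mat r r \<and>
     (\<exists>\<sigma>. \<sigma> permutes {..<r} \<and> (\<forall>i<r. \<forall>j<r. Q $$ (i, j) = (if \<sigma> j = i then 1 else 0)))"

end

theory Submission
  imports Defs "Jordan_Normal_Form.Determinant"
begin

text \<open>Let h_i be the inverse of g_i. Contracting g T = T with the basis vector e_a in one slot m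
  and with the row J_i of h_i in every other slot gives
    sum_{j<r} g_m(a,j) prod_{i<>m} [J_i = j]  =  [a < r] prod_{i<>m} h_i(J_i,a).
  Taking all J_i equal shows that the lower left block of g_m vanishes and that
  g_m(a,j) = prod_{i<>m} h_i(j,a) for a, j < r. Taking two of the J_i different, which is possible
  because d \<ge> 3 leaves two slots besides m, shows that for a < r the column a of every h_i has a
  single nonzero entry, in a row pivot(a) that does not depend on i. So g_m(a,j) for j < r is
  nonzero exactly when a < r and j = pivot(a); hence pivot permutes {..<r}, the upper left block of
  g_i is D_i Q with Q the permutation matrix of pivot, and evaluating g T = T at the diagonal index
  (a,...,a) gives D_1 ... D_d = I. Conversely, such g are invertible by the determinant formula for
  block triangular matrices, and g T = sum_j e_{sigma j} (x) ... (x) e_{sigma j} = T, where sigma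
  is the permutation of Q.\<close>

lemma index_mult_mat_sum:
  assumes "A \<in> carrier_mat n m" "B \<in> carrier_mat m p" "i < n" "j < p"
  shows "(A * B) $$ (i, j) = (\<Sum>k<m. A $$ (i, k) * B $$ (k, j))"
  using assms by (simp add: scalar_prod_def lessThan_atLeast0)

lemma prod_of_bool:
  assumes "finite A"
  shows "(\<Prod>x\<in>A. of_bool (P x)) = (of_bool (\<forall>x\<in>A. P x) :: 'a :: comm_semiring_1)"
  using assms by (induction rule: finite_induct) auto

lemma invertible_matE:
  assumes "invertible_mat A" and "A \<in> carrier_mat n n"
  obtains B where "B \<in> carrier_mat n n" "A * B = 1\<^sub>m n" "B * A = 1\<^sub>m n"
proof -
  from assms obtain B where AB: "A * B = 1\<^sub>m n" and BA: "B * A = 1\<^sub>m (dim_row B)"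
    unfolding invertible_mat_def inverts_mat_def by auto
  have "B \<in> carrier_mat n n"
    using arg_cong[OF AB, of dim_col] arg_cong[OF BA, of dim_col] assms(2) by auto
  with AB BA show thesis by (intro that) auto
qed

lemma invertible_mat_iff_det_nonzero:
  fixes A :: "'a :: field mat"
  assumes A: "A \<in> carrier_mat n n"
  shows "invertible_mat A \<longleftrightarrow> det A \<noteq> 0"
proof
  assume "invertible_mat A"
  then obtain B where B: "B \<in> carrier_mat n n" "A * B = 1\<^sub>m n"
    using A by (rule invertible_matE)
  then have "det A * det B = 1" using det_mult[OF A B(1)] by simp
  then show "det A \<noteq> 0" by auto
next
  assume "det A \<noteq> 0"
  then have "A \<in> Units (ring_mat TYPE('a) n ())" by (rule det_non_zero_imp_unit[OF A])
  then obtain B where "B \<in> carrier_mat n n" "B * A = 1\<^sub>m n" "A * B = 1\<^sub>m n"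
    unfolding Units_def ring_mat_simps by auto
  with A show "invertible_mat A"
    unfolding invertible_mat_def inverts_mat_def by auto
qed

lemma diagonal_mat_mult_index:
  assumes "D \<in> carrier_mat r r" "diagonal_mat D" "Q \<in> carrier_mat r c" "i < r" "j < c"
  shows "(D * Q) $$ (i, j) = D $$ (i, i) * Q $$ (i, j)"
proof -
  have "(D * Q) $$ (i, j) = (\<Sum>k\<in>{0..<r}. D $$ (i, k) * Q $$ (k, j))"
    using assms by (simp add: scalar_prod_def)
  also have "\<dots> = D $$ (i, i) * Q $$ (i, j)"
    using assms by (subst sum.remove[of _ i]) (auto simp: diagonal_mat_def intro!: sum.neutral)
  finally show ?thesis .
qed

lemma foldr_mult_diagonal_mat:
  assumes "distinct xs" and "\<forall>i\<in>set xs. D i \<in> carrier_mat r r \<and> diagonal_mat (D i)"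
  shows "foldr (\<lambda>i P. D i * P) xs (1\<^sub>m r) =
    mat r r (\<lambda>(a, b). if a = b then \<Prod>i\<in>set xs. D i $$ (a, a) else 0)"
  using assms
proof (induction xs)
  case Nil
  then show ?case by (auto intro!: eq_matI)
next
  case (Cons x xs)
  then show ?case
    by (auto intro!: eq_matI simp del: index_mult_mat(1) simp: diagonal_mat_mult_index[of _ r _ r])
qed

lemma permutation_mat_of_permutes:
  assumes "\<pi> permutes {..<r}"
  shows "permutation_mat r (mat r r (\<lambda>(i, j). if \<pi> i = j then 1 else 0))"
  unfolding permutation_mat_def
  using permutes_inv[OF assms] permutes_inv_eq[OF assms] by auto

lemma permutation_mat_det_nonzero:
  assumes "permutation_mat r Q"
  shows "det Q \<noteq> 0"
proof -
  obtain \<sigma> where Q: "Q \<in> carrier_mat r r" and \<sigma>: "\<sigma> permutes {..<r}"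
    and entries: "\<forall>i<r. \<forall>j<r. Q $$ (i, j) = (if \<sigma> j = i then 1 else 0)"
    using assms unfolding permutation_mat_def by blast
  have "transpose_mat Q * Q = 1\<^sub>m r"
  proof (rule eq_matI)
    fix a b assume "a < dim_row (1\<^sub>m r)" "b < dim_col (1\<^sub>m r)"
    then have ab: "a < r" "b < r" by auto
    have "(transpose_mat Q * Q) $$ (a, b) = (\<Sum>k\<in>{0..<r}. Q $$ (k, a) * Q $$ (k, b))"
      using Q ab by (simp add: scalar_prod_def)
    also have "\<dots> = (\<Sum>k\<in>{0..<r}. if k = \<sigma> a then (if \<sigma> b = k then 1 else 0) else 0)"
      using entries ab by (intro sum.cong) auto
    also have "\<dots> = 1\<^sub>m r $$ (a, b)"
      using ab permutes_in_image[OF \<sigma>] permutes_inj[OF \<sigma>] by (auto simp: inj_eq)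
    finally show "(transpose_mat Q * Q) $$ (a, b) = 1\<^sub>m r $$ (a, b)" .
  qed (use Q in auto)
  then have "det (transpose_mat Q) * det Q = 1"
    using det_mult[of "transpose_mat Q" r Q] Q by simp
  then show ?thesis by auto
qed

lemma four_block_mat_of_lower_left_zero:
  assumes "G \<in> carrier_mat n n" and "r \<le> n" and "B \<in> carrier_mat r r"
    and "\<And>a b. a < r \<Longrightarrow> b < r \<Longrightarrow> G $$ (a, b) = B $$ (a, b)"
    and "\<And>a b. r \<le> a \<Longrightarrow> a < n \<Longrightarrow> b < r \<Longrightarrow> G $$ (a, b) = 0"
  shows "G = four_block_mat B (mat r (n - r) (\<lambda>(a, b). G $$ (a, b + r))) (0\<^sub>m (n - r) r)
               (mat (n - r) (n - r) (\<lambda>(a, b). G $$ (a + r, b + r)))"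
  using assms by (auto intro!: eq_matI)

lemma diagonal_mat_invertible:
  fixes D :: "'a :: field mat"
  assumes D: "D \<in> carrier_mat r r" and "diagonal_mat D" and "\<And>a. a < r \<Longrightarrow> D $$ (a, a) \<noteq> 0"
  shows "invertible_mat D"
proof -
  have "upper_triangular D"
    using assms(1,2) by (auto simp: upper_triangular_def diagonal_mat_def)
  then have "det D = prod_list (diag_mat D)"
    using D by (rule det_upper_triangular)
  moreover have "0 \<notin> set (diag_mat D)"
    using assms by (auto simp: diag_mat_def)
  ultimately show ?thesis
    using D by (simp add: invertible_mat_iff_det_nonzero prod_list_zero_iff)
qed

lemma invertible_four_block_mat_lower_left_zero:
  fixes B :: "'a :: field mat"
  assumes B: "B \<in> carrier_mat r r" and M: "M \<in> carrier_mat r k" and A: "A \<in> carrier_mat k k"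
  shows "invertible_mat (four_block_mat B M (0\<^sub>m k r) A) \<longleftrightarrow> invertible_mat B \<and> invertible_mat A"
  unfolding invertible_mat_iff_det_nonzero[OF four_block_carrier_mat[OF B A]]
    invertible_mat_iff_det_nonzero[OF B] invertible_mat_iff_det_nonzero[OF A]
    det_four_block_mat_lower_left_zero[OF B M refl A]
  by simp

section \<open>The diagonal tensor\<close>

definition diag_idx :: "nat \<Rightarrow> nat \<Rightarrow> nat \<Rightarrow> nat" where
  "diag_idx d k = (\<lambda>i. if i < d then k else undefined)"

lemma diag_idx_in_tidx:
  assumes "\<And>i. i < d \<Longrightarrow> k < n i"
  shows "diag_idx d k \<in> tidx d n"
  using assms by (auto simp: diag_idx_def tidx_def PiE_def extensional_def)

lemma diag_tensor_diag_idx: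
  assumes "0 < d"
  shows "diag_tensor d r (diag_idx d k) = of_bool (k < r)"
  using assms by (auto simp: diag_tensor_def diag_idx_def)

lemma tact_one_mat:
  assumes a: "a \<in> tidx d n"
  shows "tact d n (\<lambda>i. 1\<^sub>m (n i)) T a = T a"
proof -
  have "(\<Prod>i<d. 1\<^sub>m (n i) $$ (a i, b i)) = (of_bool (b = a) :: real)" if b: "b \<in> tidx d n" for b
  proof -
    have "(\<Prod>i<d. 1\<^sub>m (n i) $$ (a i, b i)) = (\<Prod>i<d. of_bool (a i = b i) :: real)"
      using a b by (intro prod.cong) (simp_all add: tidx_def PiE_iff)
    also have "\<dots> = of_bool (\<forall>i\<in>{..<d}. a i = b i)"
      by (rule prod_of_bool) simp
    also have "(\<forall>i\<in>{..<d}. a i = b i) \<longleftrightarrow> b = a"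
      using a b unfolding tidx_def by (metis PiE_ext)
    finally show ?thesis .
  qed
  then have "tact d n (\<lambda>i. 1\<^sub>m (n i)) T a = (\<Sum>b\<in>tidx d n. of_bool (b = a) * T b)"
    unfolding tact_def by (intro sum.cong) auto
  also have "\<dots> = T a"
    using a by (simp add: sum_of_bool_mult_eq finite_PiE tidx_def Int_absorb1)
  finally show ?thesis .
qed

lemma diag_tensor_eq_of_bool:
  assumes "a \<in> tidx d n"
  shows "diag_tensor d r a = of_bool (a \<in> diag_idx d ` {..<r})"
proof -
  have "a = diag_idx d k \<longleftrightarrow> (\<forall>i<d. a i = k)" for k
    using assms by (auto simp: diag_idx_def tidx_def PiE_def extensional_def)
  then show ?thesis
    unfolding diag_tensor_def image_iff by (simp add: of_bool_def Bex_def)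
qed

lemma sum_tidx_diag_tensor:
  assumes "0 < d" and "\<forall>i<d. r \<le> n i"
  shows "(\<Sum>a\<in>tidx d n. F a * diag_tensor d r a) = (\<Sum>k<r. F (diag_idx d k))"
proof -
  have diag_idx: "diag_idx d ` {..<r} \<subseteq> tidx d n"
    using assms(2) by (intro image_subsetI diag_idx_in_tidx) auto
  have inj: "inj_on (diag_idx d) {..<r}"
    using assms(1) by (intro inj_onI) (metis diag_idx_def)
  have "(\<Sum>a\<in>tidx d n. F a * diag_tensor d r a) = (\<Sum>a\<in>tidx d n. of_bool (a \<in> diag_idx d ` {..<r}) * F a)"
    by (intro sum.cong) (simp_all add: diag_tensor_eq_of_bool)
  also have "\<dots> = sum F (diag_idx d ` {..<r})"
    using diag_idx by (simp add: sum_of_bool_mult_eq finite_PiE tidx_def Int_absorb1)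
  also have "\<dots> = (\<Sum>k<r. F (diag_idx d k))"
    using inj by (simp add: sum.reindex)
  finally show ?thesis .
qed

lemma tact_diag_tensor:
  assumes "0 < d" and "\<forall>i<d. r \<le> n i"
  shows "tact d n g (diag_tensor d r) a = (\<Sum>j<r. \<Prod>i<d. g i $$ (a i, j))"
  unfolding tact_def sum_tidx_diag_tensor[OF assms] by (simp add: diag_idx_def)

lemma stabilizer_contraction:
  assumes "0 < d" and "\<forall>i<d. r \<le> n i"
    and stab: "\<forall>a\<in>tidx d n. tact d n g (diag_tensor d r) a = diag_tensor d r a"
  shows "(\<Sum>j<r. \<Prod>i<d. \<Sum>x<n i. \<phi> i x * g i $$ (x, j)) = (\<Sum>k<r. \<Prod>i<d. \<phi> i k)"
proof -
  have "(\<Sum>j<r. \<Prod>i<d. \<Sum>x<n i. \<phi> i x * g i $$ (x, j))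
      = (\<Sum>j<r. \<Sum>a\<in>tidx d n. \<Prod>i<d. \<phi> i (a i) * g i $$ (a i, j))"
    unfolding tidx_def by (intro sum.cong refl prod_sum_PiE) auto
  also have "\<dots> = (\<Sum>a\<in>tidx d n. \<Sum>j<r. \<Prod>i<d. \<phi> i (a i) * g i $$ (a i, j))"
    by (rule sum.swap)
  also have "\<dots> = (\<Sum>a\<in>tidx d n. (\<Prod>i<d. \<phi> i (a i)) * tact d n g (diag_tensor d r) a)"
    by (simp add: tact_diag_tensor[OF assms(1,2)] sum_distrib_left prod.distrib)
  also have "\<dots> = (\<Sum>k<r. \<Prod>i<d. \<phi> i k)"
    using stab by (simp add: sum_tidx_diag_tensor[OF assms(1,2)] diag_idx_def)
  finally show ?thesis .
qed

section \<open>Stabilizers of the diagonal tensor\<close>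

locale diag_tensor_stabilizer =
  fixes d r :: nat and n :: "nat \<Rightarrow> nat" and g :: "nat \<Rightarrow> real mat"
  assumes three_le_d: "3 \<le> d"
    and r_le_n: "\<And>i. i < d \<Longrightarrow> r \<le> n i"
    and g_carrier: "\<And>i. i < d \<Longrightarrow> g i \<in> carrier_mat (n i) (n i)"
    and g_invertible: "\<And>i. i < d \<Longrightarrow> invertible_mat (g i)"
    and stabilizes: "\<forall>a\<in>tidx d n. tact d n g (diag_tensor d r) a = diag_tensor d r a"
begin

definition g_inv :: "nat \<Rightarrow> real mat" where
  "g_inv i = (SOME B. B \<in> carrier_mat (n i) (n i) \<and> g i * B = 1\<^sub>m (n i) \<and> B * g i = 1\<^sub>m (n i))"

lemma
  assumes i: "i < d"
  shows g_inv_carrier: "g_inv i \<in> carrier_mat (n i) (n i)"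
    and g_mult_g_inv: "g i * g_inv i = 1\<^sub>m (n i)"
    and g_inv_mult_g: "g_inv i * g i = 1\<^sub>m (n i)"
proof -
  obtain B where "B \<in> carrier_mat (n i) (n i)" "g i * B = 1\<^sub>m (n i)" "B * g i = 1\<^sub>m (n i)"
    using g_invertible[OF i] g_carrier[OF i] by (rule invertible_matE)
  then have "\<exists>B. B \<in> carrier_mat (n i) (n i) \<and> g i * B = 1\<^sub>m (n i) \<and> B * g i = 1\<^sub>m (n i)"
    by blast
  from someI_ex[OF this]
  show "g_inv i \<in> carrier_mat (n i) (n i)" "g i * g_inv i = 1\<^sub>m (n i)" "g_inv i * g i = 1\<^sub>m (n i)"
    unfolding g_inv_def by auto
qed

lemma mixed_contraction:
  assumes m: "m < d" and a: "a < n m" and J: "\<And>i. i < d \<Longrightarrow> i \<noteq> m \<Longrightarrow> J i < n i"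
  shows "(\<Sum>j<r. g m $$ (a, j) * (\<Prod>i\<in>{..<d} - {m}. of_bool (J i = j)))
       = of_bool (a < r) * (\<Prod>i\<in>{..<d} - {m}. g_inv i $$ (J i, a))"
proof -
  define \<phi> where "\<phi> i x = (if i = m then of_bool (x = a) else g_inv i $$ (J i, x))" for i x
  have row: "(\<Sum>x<n i. \<phi> i x * g i $$ (x, j)) = (if i = m then g m $$ (a, j) else of_bool (J i = j))"
    if i: "i < d" and j: "j < r" for i j
  proof (cases "i = m")
    case True
    then show ?thesis
      using a by (simp add: \<phi>_def sum_of_bool_mult_eq)
  next
    case False
    then have "(\<Sum>x<n i. \<phi> i x * g i $$ (x, j)) = (g_inv i * g i) $$ (J i, j)"
      using j J[OF i False] r_le_n[OF i]
      by (simp add: \<phi>_def index_mult_mat_sum[OF g_inv_carrier[OF i] g_carrier[OF i]])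
    then show ?thesis
      using False i j J r_le_n[OF i] by (simp add: g_inv_mult_g)
  qed
  have "(\<Prod>i<d. \<Sum>x<n i. \<phi> i x * g i $$ (x, j))
      = g m $$ (a, j) * (\<Prod>i\<in>{..<d} - {m}. of_bool (J i = j))" if j: "j < r" for j
  proof -
    have "(\<Prod>i\<in>{..<d} - {m}. \<Sum>x<n i. \<phi> i x * g i $$ (x, j)) = (\<Prod>i\<in>{..<d} - {m}. of_bool (J i = j))"
      using j by (intro prod.cong) (simp_all add: row)
    then show ?thesis
      using m j by (simp add: prod.remove[of _ m] row)
  qed
  then have "(\<Sum>j<r. g m $$ (a, j) * (\<Prod>i\<in>{..<d} - {m}. of_bool (J i = j)))
      = (\<Sum>j<r. \<Prod>i<d. \<Sum>x<n i. \<phi> i x * g i $$ (x, j))"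
    by simp
  also have "\<dots> = (\<Sum>k<r. \<Prod>i<d. \<phi> i k)"
    using three_le_d r_le_n stabilizes by (intro stabilizer_contraction) auto
  also have "\<dots> = (\<Sum>k<r. of_bool (k = a) * (\<Prod>i\<in>{..<d} - {m}. g_inv i $$ (J i, k)))"
  proof (intro sum.cong refl)
    fix k
    have "(\<Prod>i\<in>{..<d} - {m}. \<phi> i k) = (\<Prod>i\<in>{..<d} - {m}. g_inv i $$ (J i, k))"
      by (intro prod.cong) (auto simp: \<phi>_def)
    then show "(\<Prod>i<d. \<phi> i k) = of_bool (k = a) * (\<Prod>i\<in>{..<d} - {m}. g_inv i $$ (J i, k))"
      using m by (simp add: prod.remove[of _ m] \<phi>_def)
  qed
  also have "\<dots> = of_bool (a < r) * (\<Prod>i\<in>{..<d} - {m}. g_inv i $$ (J i, a))"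
    by (simp add: sum_of_bool_mult_eq)
  finally show ?thesis .
qed

lemma less_r_imp_less_n: "i < d \<Longrightarrow> a < r \<Longrightarrow> a < n i"
  using r_le_n by (meson order_less_le_trans)

lemma constant_row_contraction:
  assumes m: "m < d" and a: "a < n m" and j: "\<And>i. i < d \<Longrightarrow> j < n i"
  shows "of_bool (j < r) * g m $$ (a, j) = of_bool (a < r) * (\<Prod>i\<in>{..<d} - {m}. g_inv i $$ (j, a))"
proof -
  have other: "(if m = 0 then 1 else 0) \<in> {..<d} - {m}"
    using three_le_d by auto
  have "(\<Prod>i\<in>{..<d} - {m}. of_bool (j = k)) = (of_bool (\<forall>i\<in>{..<d} - {m}. j = k) :: real)" for k
    by (rule prod_of_bool) simp
  also have "(\<forall>i\<in>{..<d} - {m}. j = k) \<longleftrightarrow> j = k" for k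
    using other by blast
  finally have const: "(\<Prod>i\<in>{..<d} - {m}. of_bool (j = k)) = (of_bool (j = k) :: real)" for k .
  have "(\<Sum>k<r. g m $$ (a, k) * of_bool (j = k)) = of_bool (a < r) * (\<Prod>i\<in>{..<d} - {m}. g_inv i $$ (j, a))"
    using mixed_contraction[OF m a, of "\<lambda>_. j"] j unfolding const by simp
  then show ?thesis
    by (cases "j < r") (simp_all add: Int_insert_right)
qed

lemma nonconstant_rows_product_zero:
  assumes m: "m < d" and a: "a < r" and J: "\<And>i. i < d \<Longrightarrow> i \<noteq> m \<Longrightarrow> J i < n i"
    and p: "p \<in> {..<d} - {m}" and q: "q \<in> {..<d} - {m}" and "J p \<noteq> J q"
  shows "(\<Prod>i\<in>{..<d} - {m}. g_inv i $$ (J i, a)) = 0"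
proof -
  have "\<exists>i\<in>{..<d} - {m}. J i \<noteq> j" for j
    using p q \<open>J p \<noteq> J q\<close> by metis
  then have zero: "(\<Prod>i\<in>{..<d} - {m}. of_bool (J i = j)) = (0 :: real)" for j
    by (simp add: prod_of_bool)
  have "of_bool (a < r) * (\<Prod>i\<in>{..<d} - {m}. g_inv i $$ (J i, a))
      = (\<Sum>j<r. g m $$ (a, j) * (\<Prod>i\<in>{..<d} - {m}. of_bool (J i = j)))"
    by (rule mixed_contraction[OF m less_r_imp_less_n[OF m a] J, symmetric])
  also have "\<dots> = 0"
    by (simp only: zero mult_zero_right sum.neutral_const)
  finally show ?thesis
    using a by simp
qed

lemma inverse_column_nonzero:
  assumes i: "i < d" and a: "a < n i"
  shows "\<exists>t<n i. g_inv i $$ (t, a) \<noteq> 0"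
proof (rule ccontr)
  assume "\<not> ?thesis"
  then have "(g i * g_inv i) $$ (a, a) = 0"
    using index_mult_mat_sum[OF g_carrier[OF i] g_inv_carrier[OF i] a a] by simp
  then show False
    using g_mult_g_inv[OF i] a by simp
qed

text \<open>This is where \<open>d \<ge> 3\<close> is needed: besides \<open>i\<close> and \<open>i'\<close> there is a third slot \<open>m\<close>.\<close>

lemma inverse_columns_share_support:
  assumes i: "i < d" and i': "i' < d" and "i \<noteq> i'" and a: "a < r"
    and t: "t < n i" "g_inv i $$ (t, a) \<noteq> 0" and t': "t' < n i'" "g_inv i' $$ (t', a) \<noteq> 0"
  shows "t = t'"
proof (rule ccontr)
  assume "t \<noteq> t'"
  obtain m where m: "m < d" "m \<noteq> i" "m \<noteq> i'"
  proof -
    have "\<exists>m\<in>{0, 1, 2}. m \<noteq> i \<and> m \<noteq> i'"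
      using \<open>i \<noteq> i'\<close> by auto
    then obtain m where "m \<in> {0, 1, 2}" "m \<noteq> i" "m \<noteq> i'"
      by blast
    with three_le_d show thesis
      by (intro that[of m]) auto
  qed
  define J where "J k = (if k = i then t else if k = i' then t' else SOME s. s < n k \<and> g_inv k $$ (s, a) \<noteq> 0)"
    for k
  have J: "J k < n k \<and> g_inv k $$ (J k, a) \<noteq> 0" if k: "k < d" for k
  proof -
    have "\<exists>s. s < n k \<and> g_inv k $$ (s, a) \<noteq> 0"
      using inverse_column_nonzero[OF k less_r_imp_less_n[OF k a]] by auto
    from someI_ex[OF this] show ?thesis
      using t t' unfolding J_def by auto
  qed
  have "(\<Prod>k\<in>{..<d} - {m}. g_inv k $$ (J k, a)) = 0"
    by (rule nonconstant_rows_product_zero[OF m(1) a, of J i i'])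
      (use J m i i' \<open>t \<noteq> t'\<close> \<open>i \<noteq> i'\<close> in \<open>auto simp: J_def\<close>)
  moreover have "(\<Prod>k\<in>{..<d} - {m}. g_inv k $$ (J k, a)) \<noteq> 0"
    using J by simp
  ultimately show False
    by simp
qed

text \<open>Extended by the identity outside \<open>{..<r}\<close>, so that it permutes \<open>{..<r}\<close>.\<close>

definition pivot :: "nat \<Rightarrow> nat" where
  "pivot a = (if a < r then SOME t. t < n 0 \<and> g_inv 0 $$ (t, a) \<noteq> 0 else a)"

lemma pivot_unique:
  assumes i: "i < d" and a: "a < r" and t: "t < n i" "g_inv i $$ (t, a) \<noteq> 0"
  shows "t = pivot a"
proof -
  have d0: "0 < d" and d1: "1 < d"
    using three_le_d by auto
  have "\<exists>t. t < n 0 \<and> g_inv 0 $$ (t, a) \<noteq> 0"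
    using inverse_column_nonzero[OF d0 less_r_imp_less_n[OF d0 a]] by auto
  from someI_ex[OF this] have p: "pivot a < n 0" "g_inv 0 $$ (pivot a, a) \<noteq> 0"
    using a unfolding pivot_def by auto
  show ?thesis
  proof (cases "i = 0")
    case True
    obtain s where s: "s < n 1" "g_inv 1 $$ (s, a) \<noteq> 0"
      using inverse_column_nonzero[OF d1 less_r_imp_less_n[OF d1 a]] by auto
    have "t = s" and "pivot a = s"
      using inverse_columns_share_support[OF i d1 _ a t s] inverse_columns_share_support[OF d0 d1 _ a p s]
        True by auto
    then show ?thesis
      by simp
  next
    case False
    show ?thesis
      using inverse_columns_share_support[OF i d0 False a t p] .
  qed
qed

lemma pivot_nonzero:
  assumes i: "i < d" and a: "a < r"
  shows "pivot a < n i" and "g_inv i $$ (pivot a, a) \<noteq> 0"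
proof -
  obtain t where t: "t < n i" "g_inv i $$ (t, a) \<noteq> 0"
    using inverse_column_nonzero[OF i less_r_imp_less_n[OF i a]] by auto
  moreover from t have "t = pivot a"
    by (rule pivot_unique[OF i a])
  ultimately show "pivot a < n i" and "g_inv i $$ (pivot a, a) \<noteq> 0"
    by simp_all
qed

lemma g_nonzero_iff:
  assumes m: "m < d" and a: "a < n m" and j: "j < r"
  shows "g m $$ (a, j) \<noteq> 0 \<longleftrightarrow> a < r \<and> j = pivot a"
proof -
  have jn: "j < n i" if "i < d" for i
    using less_r_imp_less_n[OF that j] .
  have g_eq: "g m $$ (a, j) = of_bool (a < r) * (\<Prod>i\<in>{..<d} - {m}. g_inv i $$ (j, a))"
    using constant_row_contraction[OF m a jn] j by simp
  have k: "(if m = 0 then 1 else 0) \<in> {..<d} - {m}"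
    using three_le_d by auto
  show ?thesis
  proof (cases "a < r")
    case True
    have "(\<Prod>i\<in>{..<d} - {m}. g_inv i $$ (j, a)) \<noteq> 0 \<longleftrightarrow> j = pivot a"
      using pivot_unique[OF _ True jn] pivot_nonzero(2)[OF _ True] k by auto
    then show ?thesis
      using g_eq True by simp
  next
    case False
    then show ?thesis
      using g_eq by simp
  qed
qed

lemma pivot_less:
  assumes a: "a < r"
  shows "pivot a < r"
proof (rule ccontr)
  assume not_less: "\<not> pivot a < r"
  have d0: "0 < d"
    using three_le_d by simp
  have "of_bool (pivot a < r) * g 0 $$ (a, pivot a) = (\<Prod>i\<in>{..<d} - {0}. g_inv i $$ (pivot a, a))"
    using constant_row_contraction[OF d0 less_r_imp_less_n[OF d0 a] pivot_nonzero(1)[OF _ a]] a by simp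
  moreover have "(\<Prod>i\<in>{..<d} - {0}. g_inv i $$ (pivot a, a)) \<noteq> 0"
    using pivot_nonzero(2)[OF _ a] by simp
  ultimately show False
    using not_less by simp
qed

lemma pivot_surj:
  assumes j: "j < r"
  shows "j \<in> pivot ` {..<r}"
proof (rule ccontr)
  assume j_notin: "j \<notin> pivot ` {..<r}"
  have d0: "0 < d"
    using three_le_d by simp
  have "g 0 $$ (x, j) = 0" if "x < n 0" for x
    using g_nonzero_iff[OF d0 that j] j_notin by auto
  then have "(g_inv 0 * g 0) $$ (j, j) = 0"
    using index_mult_mat_sum[OF g_inv_carrier[OF d0] g_carrier[OF d0]] less_r_imp_less_n[OF d0 j] by simp
  then show False
    using g_inv_mult_g[OF d0] less_r_imp_less_n[OF d0 j] by simp
qed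

lemma pivot_permutes: "pivot permutes {..<r}"
proof (rule bij_imp_permutes)
  have "pivot ` {..<r} = {..<r}"
    using pivot_less pivot_surj by auto
  then show "bij_betw pivot {..<r} {..<r}"
    by (simp add: bij_betw_def finite_surj_inj)
qed (simp add: pivot_def)

lemma pivot_diagonal_product:
  assumes a: "a < r"
  shows "(\<Prod>i<d. g i $$ (a, pivot a)) = 1"
proof -
  have d0: "0 < d"
    using three_le_d by simp
  have zero: "(\<Prod>i<d. g i $$ (a, j)) = 0" if j: "j < r" "j \<noteq> pivot a" for j
  proof -
    have "g 0 $$ (a, j) = 0"
      using g_nonzero_iff[OF d0 less_r_imp_less_n[OF d0 a] j(1)] j(2) by simp
    then show ?thesis
      using d0 by (auto simp: prod_zero_iff)
  qed
  have "(\<Sum>j<r. \<Prod>i<d. g i $$ (a, j)) = (\<Prod>i<d. g i $$ (a, pivot a))"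
    using pivot_less[OF a] by (subst sum.remove[of _ "pivot a"]) (auto intro!: sum.neutral simp: zero)
  moreover have "(\<Sum>j<r. \<Prod>i<d. g i $$ (a, j)) = tact d n g (diag_tensor d r) (diag_idx d a)"
    using r_le_n by (simp add: tact_diag_tensor[OF d0] diag_idx_def)
  moreover have "diag_idx d a \<in> tidx d n"
    using diag_idx_in_tidx less_r_imp_less_n[OF _ a] by blast
  ultimately show ?thesis
    using stabilizes diag_tensor_diag_idx[OF d0] a by simp
qed

definition diag_factor :: "nat \<Rightarrow> real mat" where
  "diag_factor i = mat r r (\<lambda>(a, b). if a = b then g i $$ (a, pivot a) else 0)"

definition perm_factor :: "real mat" where
  "perm_factor = mat r r (\<lambda>(a, b). if pivot a = b then 1 else 0)"

definition upper_right_block :: "nat \<Rightarrow> real mat" where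
  "upper_right_block i = mat r (n i - r) (\<lambda>(a, b). g i $$ (a, b + r))"

definition lower_right_block :: "nat \<Rightarrow> real mat" where
  "lower_right_block i = mat (n i - r) (n i - r) (\<lambda>(a, b). g i $$ (a + r, b + r))"

lemma perm_factor_carrier: "perm_factor \<in> carrier_mat r r"
  by (simp add: perm_factor_def)

lemma perm_factor_permutation_mat: "permutation_mat r perm_factor"
  unfolding perm_factor_def by (rule permutation_mat_of_permutes[OF pivot_permutes])

lemma upper_right_block_carrier: "upper_right_block i \<in> carrier_mat r (n i - r)"
  by (simp add: upper_right_block_def)

lemma lower_right_block_carrier: "lower_right_block i \<in> carrier_mat (n i - r) (n i - r)"
  by (simp add: lower_right_block_def)

lemma diag_factor_carrier: "diag_factor i \<in> carrier_mat r r"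
  and diag_factor_diagonal: "diagonal_mat (diag_factor i)"
  unfolding diag_factor_def diagonal_mat_def by auto

lemma diag_factor_invertible:
  assumes i: "i < d"
  shows "invertible_mat (diag_factor i)"
proof (rule diagonal_mat_invertible[OF diag_factor_carrier diag_factor_diagonal])
  fix a assume a: "a < r"
  then show "diag_factor i $$ (a, a) \<noteq> 0"
    using g_nonzero_iff[OF i less_r_imp_less_n[OF i a] pivot_less[OF a]] by (simp add: diag_factor_def)
qed

lemma foldr_diag_factor: "foldr (\<lambda>i P. diag_factor i * P) [0..<d] (1\<^sub>m r) = 1\<^sub>m r"
proof -
  have "foldr (\<lambda>i P. diag_factor i * P) [0..<d] (1\<^sub>m r) =
      mat r r (\<lambda>(a, b). if a = b then \<Prod>i\<in>set [0..<d]. diag_factor i $$ (a, a) else 0)"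
    by (rule foldr_mult_diagonal_mat) (simp_all add: diag_factor_carrier diag_factor_diagonal)
  also have "\<dots> = 1\<^sub>m r"
    by (rule eq_matI) (auto simp: diag_factor_def atLeast0LessThan pivot_diagonal_product)
  finally show ?thesis .
qed

lemma g_block_form:
  assumes i: "i < d"
  shows "g i = four_block_mat (diag_factor i * perm_factor) (upper_right_block i)
                 (0\<^sub>m (n i - r) r) (lower_right_block i)"
  unfolding upper_right_block_def lower_right_block_def
proof (rule four_block_mat_of_lower_left_zero[OF g_carrier[OF i] r_le_n[OF i]])
  show "diag_factor i * perm_factor \<in> carrier_mat r r"
    by (rule mult_carrier_mat[OF diag_factor_carrier perm_factor_carrier])
next
  fix a b assume a: "a < r" and b: "b < r"
  have "(diag_factor i * perm_factor) $$ (a, b) = g i $$ (a, pivot a) * perm_factor $$ (a, b)"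
    using a b diagonal_mat_mult_index[OF diag_factor_carrier diag_factor_diagonal, of perm_factor r a b]
    by (simp add: diag_factor_def perm_factor_def)
  also have "\<dots> = g i $$ (a, b)"
    using g_nonzero_iff[OF i less_r_imp_less_n[OF i a] b] a b by (auto simp: perm_factor_def)
  finally show "g i $$ (a, b) = (diag_factor i * perm_factor) $$ (a, b)" ..
next
  fix a b assume "r \<le> a" "a < n i" "b < r"
  then show "g i $$ (a, b) = 0"
    using g_nonzero_iff[OF i \<open>a < n i\<close> \<open>b < r\<close>] by simp
qed

lemma lower_right_block_invertible:
  assumes i: "i < d"
  shows "invertible_mat (lower_right_block i)"
proof -
  have "invertible_mat (four_block_mat (diag_factor i * perm_factor) (upper_right_block i)
      (0\<^sub>m (n i - r) r) (lower_right_block i))"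
    using g_invertible[OF i] by (subst (asm) g_block_form[OF i])
  then show ?thesis
    using invertible_four_block_mat_lower_left_zero[OF mult_carrier_mat[OF diag_factor_carrier
        perm_factor_carrier] upper_right_block_carrier lower_right_block_carrier]
    by simp
qed

lemma stabilizer_block_form:
  "\<exists>D Q A M.
     (\<forall>i<d. D i \<in> carrier_mat r r \<and> diagonal_mat (D i) \<and> invertible_mat (D i)) \<and>
     foldr (\<lambda>i P. D i * P) [0..<d] (1\<^sub>m r) = 1\<^sub>m r \<and>
     permutation_mat r Q \<and>
     (\<forall>i<d. A i \<in> carrier_mat (n i - r) (n i - r) \<and> invertible_mat (A i) \<and>
            M i \<in> carrier_mat r (n i - r) \<and>
            g i = four_block_mat (D i * Q) (M i) (0\<^sub>m (n i - r) r) (A i))"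
proof (intro exI conjI allI impI)
  fix i assume i: "i < d"
  show "diag_factor i \<in> carrier_mat r r" "diagonal_mat (diag_factor i)" "invertible_mat (diag_factor i)"
    using diag_factor_carrier diag_factor_diagonal diag_factor_invertible[OF i] .
  show "lower_right_block i \<in> carrier_mat (n i - r) (n i - r)" "invertible_mat (lower_right_block i)"
    "upper_right_block i \<in> carrier_mat r (n i - r)"
    using lower_right_block_carrier lower_right_block_invertible[OF i] upper_right_block_carrier .
  show "g i = four_block_mat (diag_factor i * perm_factor) (upper_right_block i)
      (0\<^sub>m (n i - r) r) (lower_right_block i)"
    using g_block_form[OF i] .
qed (fact foldr_diag_factor perm_factor_permutation_mat)+

end

lemma block_form_invertible:
  assumes D: "D \<in> carrier_mat r r" "invertible_mat D" and Q: "permutation_mat r Q"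
    and M: "M \<in> carrier_mat r k" and A: "A \<in> carrier_mat k k" "invertible_mat A"
  shows "invertible_mat (four_block_mat (D * Q) M (0\<^sub>m k r) A)"
proof -
  have Q_carrier: "Q \<in> carrier_mat r r"
    using Q by (simp add: permutation_mat_def)
  have "det (D * Q) \<noteq> 0"
    using det_mult[OF D(1) Q_carrier] D permutation_mat_det_nonzero[OF Q]
    by (simp add: invertible_mat_iff_det_nonzero)
  then have "invertible_mat (D * Q)"
    using invertible_mat_iff_det_nonzero mult_carrier_mat[OF D(1) Q_carrier] by blast
  then show ?thesis
    using invertible_four_block_mat_lower_left_zero[OF mult_carrier_mat[OF D(1) Q_carrier] M A(1)] A(2)
    by simp
qed

lemma block_form_stabilizes:
  fixes g D :: "nat \<Rightarrow> real mat"
  assumes d: "0 < d" and r_le_n: "\<forall>i<d. r \<le> n i"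
    and D: "\<forall>i<d. D i \<in> carrier_mat r r \<and> diagonal_mat (D i)"
    and prod_D: "foldr (\<lambda>i P. D i * P) [0..<d] (1\<^sub>m r) = 1\<^sub>m r"
    and Q: "permutation_mat r Q"
    and blocks: "\<forall>i<d. M i \<in> carrier_mat r (n i - r) \<and> A i \<in> carrier_mat (n i - r) (n i - r) \<and>
                   g i = four_block_mat (D i * Q) (M i) (0\<^sub>m (n i - r) r) (A i)"
    and a: "a \<in> tidx d n"
  shows "tact d n g (diag_tensor d r) a = diag_tensor d r a"
proof -
  obtain \<sigma> where Q_carrier: "Q \<in> carrier_mat r r" and \<sigma>: "\<sigma> permutes {..<r}"
    and Q_index: "\<forall>i<r. \<forall>j<r. Q $$ (i, j) = (if \<sigma> j = i then 1 else 0)"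
    using Q unfolding permutation_mat_def by blast
  have \<sigma>_less: "\<sigma> j < r" if "j < r" for j
    using permutes_in_image[OF \<sigma>] that by simp
  have prod_diag: "(\<Prod>i<d. D i $$ (k, k)) = 1" if k: "k < r" for k
    using arg_cong[OF prod_D, of "\<lambda>P. P $$ (k, k)"] foldr_mult_diagonal_mat[of "[0..<d]" D r] D k
    by (simp add: atLeast0LessThan)
  have column: "g i $$ (x, j) = 1\<^sub>m (n i) $$ (x, \<sigma> j) * D i $$ (\<sigma> j, \<sigma> j)"
    if i: "i < d" and x: "x < n i" and j: "j < r" for i x j
  proof -
    have Di: "D i \<in> carrier_mat r r" "diagonal_mat (D i)"
      using D i by auto
    have "g i $$ (x, j) = (if x < r then (D i * Q) $$ (x, j) else 0)"
      using blocks i x j Di(1) Q_carrier r_le_n by auto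
    also have "\<dots> = (if x < r then D i $$ (x, x) * Q $$ (x, j) else 0)"
      using diagonal_mat_mult_index[OF Di Q_carrier _ j] by simp
    also have "\<dots> = 1\<^sub>m (n i) $$ (x, \<sigma> j) * D i $$ (\<sigma> j, \<sigma> j)"
      using Q_index \<sigma>_less[OF j] j x i r_le_n by auto
    finally show ?thesis .
  qed
  have "tact d n g (diag_tensor d r) a = (\<Sum>j<r. \<Prod>i<d. g i $$ (a i, j))"
    by (rule tact_diag_tensor[OF d r_le_n])
  also have "\<dots> = (\<Sum>j<r. \<Prod>i<d. 1\<^sub>m (n i) $$ (a i, \<sigma> j))"
  proof (rule sum.cong[OF refl])
    fix j assume "j \<in> {..<r}"
    then have j: "j < r" by simp
    have "(\<Prod>i<d. g i $$ (a i, j)) = (\<Prod>i<d. 1\<^sub>m (n i) $$ (a i, \<sigma> j) * D i $$ (\<sigma> j, \<sigma> j))"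
      using column a j by (intro prod.cong) (auto simp: tidx_def)
    then show "(\<Prod>i<d. g i $$ (a i, j)) = (\<Prod>i<d. 1\<^sub>m (n i) $$ (a i, \<sigma> j))"
      using prod_diag[OF \<sigma>_less[OF j]] by (simp add: prod.distrib)
  qed
  also have "\<dots> = (\<Sum>k<r. \<Prod>i<d. 1\<^sub>m (n i) $$ (a i, k))"
    using sum.permute[OF \<sigma>, of "\<lambda>k. \<Prod>i<d. 1\<^sub>m (n i) $$ (a i, k)"] unfolding comp_def
    by (rule sym)
  also have "\<dots> = tact d n (\<lambda>i. 1\<^sub>m (n i)) (diag_tensor d r) a"
    by (rule tact_diag_tensor[OF d r_le_n, symmetric])
  also have "\<dots> = diag_tensor d r a"
    by (rule tact_one_mat[OF a])
  finally show ?thesis .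
qed

lemma block_form_imp_stabilizer:
  fixes g D :: "nat \<Rightarrow> real mat"
  assumes D: "\<forall>i<d. D i \<in> carrier_mat r r \<and> diagonal_mat (D i) \<and> invertible_mat (D i)"
    and prod_D: "foldr (\<lambda>i P. D i * P) [0..<d] (1\<^sub>m r) = 1\<^sub>m r"
    and Q: "permutation_mat r Q"
    and blocks: "\<forall>i<d. A i \<in> carrier_mat (n i - r) (n i - r) \<and> invertible_mat (A i) \<and>
                   M i \<in> carrier_mat r (n i - r) \<and>
                   g i = four_block_mat (D i * Q) (M i) (0\<^sub>m (n i - r) r) (A i)"
    and "0 < d" and "\<forall>i<d. r \<le> n i"
  shows "(\<forall>i<d. invertible_mat (g i)) \<and>
    (\<forall>a\<in>tidx d n. tact d n g (diag_tensor d r) a = diag_tensor d r a)"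
proof (intro conjI allI impI ballI)
  fix i assume i: "i < d"
  have "invertible_mat (four_block_mat (D i * Q) (M i) (0\<^sub>m (n i - r) r) (A i))"
    using D blocks i by (intro block_form_invertible[OF _ _ Q]) auto
  then show "invertible_mat (g i)"
    using blocks i by simp
next
  fix a assume a: "a \<in> tidx d n"
  show "tact d n g (diag_tensor d r) a = diag_tensor d r a"
    by (rule block_form_stabilizes[where M = M and A = A, OF assms(5,6) _ prod_D Q _ a])
      (use D blocks in auto)
qed

theorem mainTheorem3:
  fixes d r :: nat and n :: "nat \<Rightarrow> nat" and g :: "nat \<Rightarrow> real mat"
  assumes "d \<ge> 3" and "\<forall>i<d. n i \<ge> 2"
    and "r \<ge> 1" and "\<forall>i<d. r \<le> n i"
    and "\<forall>i<d. g i \<in> carrier_mat (n i) (n i)"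
  shows "((\<forall>i<d. invertible_mat (g i)) \<and>
          (\<forall>a\<in>tidx d n. tact d n g (diag_tensor d r) a = diag_tensor d r a))
     \<longleftrightarrow>
     (\<exists>D Q A M.
        (\<forall>i<d. D i \<in> carrier_mat r r \<and> diagonal_mat (D i) \<and> invertible_mat (D i)) \<and>
        foldr (\<lambda>i P. D i * P) [0..<d] (1\<^sub>m r) = 1\<^sub>m r \<and>
        permutation_mat r Q \<and>
        (\<forall>i<d. A i \<in> carrier_mat (n i - r) (n i - r) \<and> invertible_mat (A i) \<and>
               M i \<in> carrier_mat r (n i - r) \<and>
               g i = four_block_mat (D i * Q) (M i) (0\<^sub>m (n i - r) r) (A i)))"
  (is "?stabilizer \<longleftrightarrow> ?block_form")
proof
  assume ?stabilizer
  then interpret diag_tensor_stabilizer d r n g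
    using assms(1,4,5) by unfold_locales auto
  show ?block_form
    by (rule stabilizer_block_form)
next
  assume ?block_form
  then show ?stabilizer
    using assms(1,4) by (elim exE conjE) (rule block_form_imp_stabilizer; (assumption | simp))
qed

end
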